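(* Let $S=\langle P,\varphi\rangle$ be a SUT model, $t$ a strength and $N\ge1$ an integer. The optimal cost of the Partial MaxSAT instance $TPMSat_{CX}^{N,t,S}$ (defined in the context) is $|\mathcal T_a|-T(N;t,S)$.
   Context: A SUT model is $S=\langle P,\varphi\rangle$, where $P$ is a finite set of parameters, each $p\in P$ having a finite nonempty domain $d(p)$, and $\varphi$ is a propositional formula whose atoms have the form $(p=v)$ with $p\in P$, $v\in d(p)$. A test case is a full assignment $A$ giving each $p$ a value in $d(p)$ such that $\varphi$ is true when each atom $(p=v)$ is read as true iff $A(p)=v$; it is assumed that at least one test case exists. Fix a strength $t$ with $1\le t\le|P|$. A $t$-tuple is an assignment of values to exactly $t$ distinct parameters, viewed as a set of pairs $(p,v)$; a test case covers $\tau$ if it assigns $v$ to $p$ for every $(p,v)\in\tau$. A $t$-tuple is allowed if some test case covers it; $\mathcal T_a$ is the set of allowed $t$-tuples. The Tuple Number $T(N;t,S)$ is the maximum number of $t$-tuples covered (each by at least one member) by a list of $N$ test cases. $[N]=\{1,\dots,N\}$. A Partial MaxSAT instance consists of hard constraints and soft clauses $(c,w)$ with positive integer weights; its optimal cost is the minimum, over truth assignments satisfying all hard constraints, of the total weight of falsified soft clauses ($\infty$ if the hard constraints are unsatisfiable). Variables: $x_{i,p,v}$ ($i\in[N]$, $p\in P$, $v\in d(p)$), $c^i_\tau$ and $c_\tau$ ($i\in[N]$, $\tau\in\mathcal T_a$). Hard constraints of $TPMSat_{CX}^{N,t,S}$: (X) for every $i\in[N]$, $p\in P$: exactly one of $\{x_{i,p,v}:v\in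 d(p)\}$ is true; (SUTX) for every $i\in[N]$: the formula obtained from $\varphi$ by replacing each atom $(p=v)$ with $x_{i,p,v}$; (CX) for every $i\in[N]$, $\tau\in\mathcal T_a$, $(p,v)\in\tau$: $c^i_\tau\rightarrow x_{i,p,v}$; (RC) for every $\tau\in\mathcal T_a$: $c_\tau\leftrightarrow\bigvee_{i\in[N]}c^i_\tau$. Soft clauses (SoftC): $(c_\tau,1)$ for every $\tau\in\mathcal T_a$. *)

theory Defs
  imports Main "HOL-Library.Multiset" "HOL-Library.Extended_Nat"
begin

datatype 'a form =
    Atom 'a
  | FTrue
  | FFalse
  | Neg "'a form"
  | Conj "'a form" "'a form"
  | Disj "'a form" "'a form"
  | Imp "'a form" "'a form"
  | Iff "'a form" "'a form"
  | BigAnd "'a form list"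
  | BigOr "'a form list"

fun eval :: "('a \<Rightarrow> bool) \<Rightarrow> 'a form \<Rightarrow> bool" where
  "eval I (Atom a) = I a"
| "eval I FTrue = True"
| "eval I FFalse = False"
| "eval I (Neg f) = (\<not> eval I f)"
| "eval I (Conj f g) = (eval I f \<and> eval I g)"
| "eval I (Disj f g) = (eval I f \<or> eval I g)"
| "eval I (Imp f g) = (eval I f \<longrightarrow> eval I g)"
| "eval I (Iff f g) = (eval I f \<longleftrightarrow> eval I g)"
| "eval I (BigAnd fs) = (\<forall>f\<in>set fs. eval I f)"
| "eval I (BigOr fs) = (\<exists>f\<in>set fs. eval I f)"

definition list_of_set :: "'a set \<Rightarrow> 'a list" where
  "list_of_set S = (SOME xs. distinct xs \<and> set xs = S)"

definition exactly_one :: "'a set \<Rightarrow> 'a form" where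
  "exactly_one S = BigOr (map (\<lambda>a. Conj (Atom a)
      (BigAnd (map (\<lambda>b. Neg (Atom b)) (list_of_set (S - {a}))))) (list_of_set S))"

text \<open>Optimal cost: minimum over assignments satisfying all hard
  constraints of the total weight of falsified soft clauses; \<infinity> if none exists
  (Inf of the empty set of enat).\<close>
definition opt_cost :: "'x form set \<Rightarrow> ('x form \<times> nat) multiset \<Rightarrow> enat" where
  "opt_cost H S = Inf {enat (sum_mset (image_mset snd (filter_mset (\<lambda>(c,w). \<not> eval I c) S)))
                       | I. \<forall>h\<in>H. eval I h}"

definition sut_model :: "'p set \<Rightarrow> ('p \<Rightarrow> 'v set) \<Rightarrow> ('p \<times> 'v) form \<Rightarrow> bool" where
  "sut_model P d \<phi> \<longleftrightarrow> finite P \<and> (\<forall>p\<in>P. finite (d p) \<and> d p \<noteq> {})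
     \<and> (\<forall>(p,v)\<in>set_form \<phi>. p \<in> P \<and> v \<in> d p)"

definition test_case :: "'p set \<Rightarrow> ('p \<Rightarrow> 'v set) \<Rightarrow> ('p \<times> 'v) form \<Rightarrow> ('p \<Rightarrow> 'v) \<Rightarrow> bool" where
  "test_case P d \<phi> A \<longleftrightarrow> (\<forall>p\<in>P. A p \<in> d p) \<and> eval (\<lambda>(p,v). A p = v) \<phi>"

text \<open>A t-tuple: an assignment of values to exactly t distinct parameters, as a set of pairs.\<close>
definition t_tuple :: "'p set \<Rightarrow> ('p \<Rightarrow> 'v set) \<Rightarrow> nat \<Rightarrow> ('p \<times> 'v) set \<Rightarrow> bool" where
  "t_tuple P d t \<tau> \<longleftrightarrow> \<tau> \<subseteq> {(p,v). p \<in> P \<and> v \<in> d p} \<and> finite \<tau> \<and> card \<tau> = t \<and> inj_on fst \<tau>"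

definition covers :: "('p \<Rightarrow> 'v) \<Rightarrow> ('p \<times> 'v) set \<Rightarrow> bool" where
  "covers A \<tau> \<longleftrightarrow> (\<forall>(p,v)\<in>\<tau>. A p = v)"

definition allowed_tuples :: "'p set \<Rightarrow> ('p \<Rightarrow> 'v set) \<Rightarrow> ('p \<times> 'v) form \<Rightarrow> nat \<Rightarrow> ('p \<times> 'v) set set" where
  "allowed_tuples P d \<phi> t = {\<tau>. t_tuple P d t \<tau> \<and> (\<exists>A. test_case P d \<phi> A \<and> covers A \<tau>)}"

definition covered_tuples :: "'p set \<Rightarrow> ('p \<Rightarrow> 'v set) \<Rightarrow> nat \<Rightarrow> ('p \<Rightarrow> 'v) list \<Rightarrow> ('p \<times> 'v) set set" where
  "covered_tuples P d t L = {\<tau>. t_tuple P d t \<tau> \<and> (\<exists>A\<in>set L. covers A \<tau>)}"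

definition tuple_number :: "nat \<Rightarrow> nat \<Rightarrow> 'p set \<Rightarrow> ('p \<Rightarrow> 'v set) \<Rightarrow> ('p \<times> 'v) form \<Rightarrow> nat" where
  "tuple_number N t P d \<phi> = Max {card (covered_tuples P d t L) | L.
       length L = N \<and> (\<forall>A\<in>set L. test_case P d \<phi> A)}"

datatype ('p,'v) mvar =
    XVar nat 'p 'v
  | CIVar nat "('p \<times> 'v) set"
  | CVar "('p \<times> 'v) set"

definition hard_X :: "nat \<Rightarrow> 'p set \<Rightarrow> ('p \<Rightarrow> 'v set) \<Rightarrow> ('p,'v) mvar form set" where
  "hard_X N P d = {exactly_one {XVar i p v | v. v \<in> d p} | i p. i \<in> {1..N} \<and> p \<in> P}"

definition hard_SUTX :: "nat \<Rightarrow> ('p \<times> 'v) form \<Rightarrow> ('p,'v) mvar form set" where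
  "hard_SUTX N \<phi> = {map_form (\<lambda>(p,v). XVar i p v) \<phi> | i. i \<in> {1..N}}"

definition hard_CX :: "nat \<Rightarrow> ('p \<times> 'v) set set \<Rightarrow> ('p,'v) mvar form set" where
  "hard_CX N Ta = {Imp (Atom (CIVar i \<tau>)) (Atom (XVar i p v)) | i \<tau> p v.
                     i \<in> {1..N} \<and> \<tau> \<in> Ta \<and> (p,v) \<in> \<tau>}"

definition hard_RC :: "nat \<Rightarrow> ('p \<times> 'v) set set \<Rightarrow> ('p,'v) mvar form set" where
  "hard_RC N Ta = {Iff (Atom (CVar \<tau>)) (BigOr (map (\<lambda>i. Atom (CIVar i \<tau>)) [1..<N+1])) | \<tau>. \<tau> \<in> Ta}"

definition TPMSat_CX_hard :: "nat \<Rightarrow> nat \<Rightarrow> 'p set \<Rightarrow> ('p \<Rightarrow> 'v set) \<Rightarrow> ('p \<times> 'v) form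
    \<Rightarrow> ('p,'v) mvar form set" where
  "TPMSat_CX_hard N t P d \<phi> =
     (let Ta = allowed_tuples P d \<phi> t in
      hard_X N P d \<union> hard_SUTX N \<phi> \<union> hard_CX N Ta \<union> hard_RC N Ta)"

definition TPMSat_CX_soft :: "nat \<Rightarrow> nat \<Rightarrow> 'p set \<Rightarrow> ('p \<Rightarrow> 'v set) \<Rightarrow> ('p \<times> 'v) form
    \<Rightarrow> (('p,'v) mvar form \<times> nat) multiset" where
  "TPMSat_CX_soft N t P d \<phi> = image_mset (\<lambda>\<tau>. (Atom (CVar \<tau>), 1)) (mset_set (allowed_tuples P d \<phi> t))"

end

theory Submission
  imports Defs
begin

text \<open>A model of the hard constraints is the same thing as N test cases (read off from the
  variables x) together with flags: c^i_\<tau> may only be set if the i-th test case covers \<tau>,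
  and c_\<tau> is their disjunction. Hence the true soft clauses of a model are among the tuples
  covered by its N test cases, and the canonical model of any N test cases makes exactly the
  covered tuples true. The optimal cost is therefore |T_a| minus the largest coverage, i.e.
  |T_a| - T(N;t,S).\<close>

lemma set_conv_nth_from_1: "set xs = (\<lambda>i. xs ! (i - 1)) ` {1..length xs}"
proof -
  have "{1..length xs} = Suc ` {..<length xs}" by (simp add: image_Suc_lessThan)
  then show ?thesis by (auto simp: image_image in_set_conv_nth)
qed

lemma
  assumes "finite S"
  shows distinct_list_of_set: "distinct (list_of_set S)"
    and set_list_of_set: "set (list_of_set S) = S"
proof -
  have "distinct (list_of_set S) \<and> set (list_of_set S) = S"
    unfolding list_of_set_def by (rule someI_ex) (use finite_distinct_list assms in blast)
  then show "distinct (list_of_set S)" and "set (list_of_set S) = S" by auto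
qed

lemma eval_cong: "(\<And>x. x \<in> set_form \<phi> \<Longrightarrow> I x = J x) \<Longrightarrow> eval I \<phi> = eval J \<phi>"
  by (induction \<phi>) auto

lemma eval_map_form: "eval I (map_form f \<phi>) = eval (I \<circ> f) \<phi>"
  by (induction \<phi>) auto

lemma eval_exactly_one:
  assumes "finite S"
  shows "eval I (exactly_one S) \<longleftrightarrow> (\<exists>!a. a \<in> S \<and> I a)"
  using assms by (auto simp: exactly_one_def distinct_list_of_set set_list_of_set)

lemma finite_allowed_tuples:
  assumes "sut_model P d \<phi>"
  shows "finite (allowed_tuples P d \<phi> t)"
proof (rule finite_subset)
  show "allowed_tuples P d \<phi> t \<subseteq> Pow (Sigma P d)"
    unfolding allowed_tuples_def t_tuple_def by auto
  show "finite (Pow (Sigma P d))"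
    using assms unfolding sut_model_def by auto
qed

lemma covered_tuples_subset_allowed_tuples:
  assumes "\<forall>A\<in>set L. test_case P d \<phi> A"
  shows "covered_tuples P d t L \<subseteq> allowed_tuples P d \<phi> t"
  using assms unfolding covered_tuples_def allowed_tuples_def by auto

lemma
  assumes sut: "sut_model P d \<phi>"
  shows card_covered_tuples_le_tuple_number:
      "\<lbrakk>length L = N; \<forall>A\<in>set L. test_case P d \<phi> A\<rbrakk>
        \<Longrightarrow> card (covered_tuples P d t L) \<le> tuple_number N t P d \<phi>"
    and tuple_number_attained:
      "\<exists>A. test_case P d \<phi> A \<Longrightarrow> \<exists>L. length L = N \<and> (\<forall>A\<in>set L. test_case P d \<phi> A)
        \<and> card (covered_tuples P d t L) = tuple_number N t P d \<phi>"
proof -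
  define C where "C = {card (covered_tuples P d t L) | L. length L = N \<and> (\<forall>A\<in>set L. test_case P d \<phi> A)}"
  have "C \<subseteq> {..card (allowed_tuples P d \<phi> t)}"
    unfolding C_def
    using card_mono[OF finite_allowed_tuples[OF sut] covered_tuples_subset_allowed_tuples] by auto
  then have "finite C" by (rule finite_subset) simp
  then show "\<lbrakk>length L = N; \<forall>A\<in>set L. test_case P d \<phi> A\<rbrakk>
        \<Longrightarrow> card (covered_tuples P d t L) \<le> tuple_number N t P d \<phi>" for L
    unfolding tuple_number_def C_def[symmetric] by (auto intro: Max_ge simp: C_def)
  assume "\<exists>A. test_case P d \<phi> A"
  then obtain A where "test_case P d \<phi> A" by blast
  then have "card (covered_tuples P d t (replicate N A)) \<in> C" unfolding C_def by auto
  with \<open>finite C\<close> have "tuple_number N t P d \<phi> \<in> C"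
    unfolding tuple_number_def C_def[symmetric] by (intro Max_in) auto
  then show "\<exists>L. length L = N \<and> (\<forall>A\<in>set L. test_case P d \<phi> A)
        \<and> card (covered_tuples P d t L) = tuple_number N t P d \<phi>"
    unfolding C_def by auto
qed

lemma TPMSat_CX_soft_cost:
  assumes "sut_model P d \<phi>"
  shows "sum_mset (image_mset snd (filter_mset (\<lambda>(c,w). \<not> eval I c) (TPMSat_CX_soft N t P d \<phi>)))
    = card {\<tau> \<in> allowed_tuples P d \<phi> t. \<not> I (CVar \<tau>)}"
  using finite_allowed_tuples[OF assms]
  by (simp add: TPMSat_CX_soft_def filter_mset_image_mset image_mset.compositionality comp_def)

lemma eval_hard_X:
  assumes "\<forall>p\<in>P. finite (d p)"
  shows "(\<forall>h\<in>hard_X N P d. eval I h) \<longleftrightarrow> (\<forall>i\<in>{1..N}. \<forall>p\<in>P. \<exists>!v. v \<in> d p \<and> I (XVar i p v))"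
proof -
  have "{XVar i p v | v. v \<in> d p} = XVar i p ` d p" for i p by auto
  then have "hard_X N P d = (\<lambda>(i,p). exactly_one (XVar i p ` d p)) ` ({1..N} \<times> P)"
    unfolding hard_X_def by force
  moreover have "(\<exists>!x. x \<in> XVar i p ` d p \<and> I x) \<longleftrightarrow> (\<exists>!v. v \<in> d p \<and> I (XVar i p v))" for i p
    by blast
  ultimately show ?thesis
    using assms by (simp add: eval_exactly_one)
qed

lemma eval_hard_SUTX:
  "(\<forall>h\<in>hard_SUTX N \<phi>. eval I h) \<longleftrightarrow> (\<forall>i\<in>{1..N}. eval (\<lambda>(p,v). I (XVar i p v)) \<phi>)"
proof -
  have "hard_SUTX N \<phi> = (\<lambda>i. map_form (\<lambda>(p,v). XVar i p v) \<phi>) ` {1..N}"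
    unfolding hard_SUTX_def by auto
  then show ?thesis by (simp add: eval_map_form comp_def case_prod_beta')
qed

lemma eval_hard_CX:
  "(\<forall>h\<in>hard_CX N Ta. eval I h) \<longleftrightarrow>
     (\<forall>i\<in>{1..N}. \<forall>\<tau>\<in>Ta. I (CIVar i \<tau>) \<longrightarrow> (\<forall>(p,v)\<in>\<tau>. I (XVar i p v)))"
proof -
  have "(\<forall>h\<in>hard_CX N Ta. eval I h) \<longleftrightarrow> (\<forall>i \<tau> p v. i \<in> {1..N} \<and> \<tau> \<in> Ta \<and> (p,v) \<in> \<tau>
      \<longrightarrow> eval I (Imp (Atom (CIVar i \<tau>)) (Atom (XVar i p v))))"
    unfolding hard_CX_def by blast
  then show ?thesis by fastforce
qed

lemma eval_hard_RC:
  "(\<forall>h\<in>hard_RC N Ta. eval I h) \<longleftrightarrow> (\<forall>\<tau>\<in>Ta. I (CVar \<tau>) \<longleftrightarrow> (\<exists>i\<in>{1..N}. I (CIVar i \<tau>)))"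
proof -
  have "hard_RC N Ta = (\<lambda>\<tau>. Iff (Atom (CVar \<tau>)) (BigOr (map (\<lambda>i. Atom (CIVar i \<tau>)) [1..<N+1]))) ` Ta"
    unfolding hard_RC_def by blast
  then show ?thesis by (simp add: atLeastLessThanSuc_atLeastAtMost del: upt_Suc)
qed

lemma eval_TPMSat_CX_hard:
  assumes "sut_model P d \<phi>"
  shows "(\<forall>h\<in>TPMSat_CX_hard N t P d \<phi>. eval I h) \<longleftrightarrow>
    (\<forall>i\<in>{1..N}. \<forall>p\<in>P. \<exists>!v. v \<in> d p \<and> I (XVar i p v)) \<and>
    (\<forall>i\<in>{1..N}. eval (\<lambda>(p,v). I (XVar i p v)) \<phi>) \<and>
    (\<forall>i\<in>{1..N}. \<forall>\<tau>\<in>allowed_tuples P d \<phi> t. I (CIVar i \<tau>) \<longrightarrow> (\<forall>(p,v)\<in>\<tau>. I (XVar i p v))) \<and>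
    (\<forall>\<tau>\<in>allowed_tuples P d \<phi> t. I (CVar \<tau>) \<longleftrightarrow> (\<exists>i\<in>{1..N}. I (CIVar i \<tau>)))"
proof -
  have "\<forall>p\<in>P. finite (d p)" using assms unfolding sut_model_def by blast
  then show ?thesis unfolding TPMSat_CX_hard_def Let_def
    by (simp add: ball_Un eval_hard_X eval_hard_SUTX eval_hard_CX eval_hard_RC)
qed

lemma TPMSat_CX_model_decodes:
  assumes sut: "sut_model P d \<phi>" and model: "\<forall>h\<in>TPMSat_CX_hard N t P d \<phi>. eval I h"
  obtains L where "length L = N" and "\<forall>A\<in>set L. test_case P d \<phi> A"
    and "{\<tau> \<in> allowed_tuples P d \<phi> t. I (CVar \<tau>)} \<subseteq> covered_tuples P d t L"
proof
  let ?Ta = "allowed_tuples P d \<phi> t"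
  have unique: "\<And>i p. i \<in> {1..N} \<Longrightarrow> p \<in> P \<Longrightarrow> \<exists>!v. v \<in> d p \<and> I (XVar i p v)"
    and sat: "\<And>i. i \<in> {1..N} \<Longrightarrow> eval (\<lambda>(p,v). I (XVar i p v)) \<phi>"
    and flag: "\<And>i \<tau> p v. i \<in> {1..N} \<Longrightarrow> \<tau> \<in> ?Ta \<Longrightarrow> I (CIVar i \<tau>) \<Longrightarrow> (p,v) \<in> \<tau>
      \<Longrightarrow> I (XVar i p v)"
    and some_flag: "\<And>\<tau>. \<tau> \<in> ?Ta \<Longrightarrow> I (CVar \<tau>) \<Longrightarrow> \<exists>i\<in>{1..N}. I (CIVar i \<tau>)"
    using model unfolding eval_TPMSat_CX_hard[OF sut] by fast+
  define A where "A i p = (THE v. v \<in> d p \<and> I (XVar i p v))" for i p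
  have A_in: "A i p \<in> d p" and XVar_iff: "I (XVar i p v) \<longleftrightarrow> A i p = v"
    if "i \<in> {1..N}" "p \<in> P" "v \<in> d p" for i p v
    using theI'[OF unique[OF that(1,2)]] unique[OF that(1,2)] that(3) unfolding A_def by auto
  have set_form_\<phi>: "p \<in> P" "v \<in> d p" if "(p,v) \<in> set_form \<phi>" for p v
    using sut that unfolding sut_model_def by auto
  have "test_case P d \<phi> (A i)" if i: "i \<in> {1..N}" for i
  proof -
    have "eval (\<lambda>(p,v). I (XVar i p v)) \<phi> = eval (\<lambda>(p,v). A i p = v) \<phi>"
    proof (rule eval_cong)
      fix x assume x: "x \<in> set_form \<phi>"
      obtain p v where "x = (p, v)" by fastforce
      with x show "(\<lambda>(p,v). I (XVar i p v)) x = (\<lambda>(p,v). A i p = v) x"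
        by (simp add: XVar_iff[OF i] set_form_\<phi>)
    qed
    then show ?thesis
      using sat[OF i] A_in[OF i] sut unfolding test_case_def sut_model_def by auto
  qed
  then show "\<forall>A\<in>set (map A [1..<N+1]). test_case P d \<phi> A" by auto
  show "length (map A [1..<N+1]) = N" by simp
  show "{\<tau> \<in> ?Ta. I (CVar \<tau>)} \<subseteq> covered_tuples P d t (map A [1..<N+1])"
  proof safe
    fix \<tau> assume \<tau>: "\<tau> \<in> ?Ta" "I (CVar \<tau>)"
    then obtain i where i: "i \<in> {1..N}" "I (CIVar i \<tau>)" using some_flag by blast
    have tuple: "t_tuple P d t \<tau>" using \<tau> unfolding allowed_tuples_def by blast
    have "A i p = v" if "(p,v) \<in> \<tau>" for p v
      using flag[OF i(1) \<tau>(1) i(2) that] XVar_iff[OF i(1)] tuple that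
      unfolding t_tuple_def by blast
    then have "covers (A i) \<tau>" unfolding covers_def by blast
    then show "\<tau> \<in> covered_tuples P d t (map A [1..<N+1])"
      using tuple i unfolding covered_tuples_def by (auto simp del: upt_Suc)
  qed
qed

lemma test_cases_encode_TPMSat_CX_model:
  assumes sut: "sut_model P d \<phi>" and "length L = N" and tests: "\<forall>A\<in>set L. test_case P d \<phi> A"
  obtains I where "\<forall>h\<in>TPMSat_CX_hard N t P d \<phi>. eval I h"
    and "\<And>\<tau>. \<tau> \<in> allowed_tuples P d \<phi> t \<Longrightarrow> I (CVar \<tau>) \<longleftrightarrow> \<tau> \<in> covered_tuples P d t L"
proof
  define I where "I x = (case x of
      XVar i p v \<Rightarrow> (L ! (i - 1)) p = v
    | CIVar i \<tau> \<Rightarrow> covers (L ! (i - 1)) \<tau>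
    | CVar \<tau> \<Rightarrow> (\<exists>A\<in>set L. covers A \<tau>))" for x
  have L_conv: "set L = (\<lambda>i. L ! (i - 1)) ` {1..N}"
    using \<open>length L = N\<close> by (simp add: set_conv_nth_from_1)
  then have "test_case P d \<phi> (L ! (i - 1))" if "i \<in> {1..N}" for i
    using tests that by blast
  then show "\<forall>h\<in>TPMSat_CX_hard N t P d \<phi>. eval I h"
    unfolding eval_TPMSat_CX_hard[OF sut] using L_conv
    by (auto simp: I_def test_case_def covers_def)
  show "I (CVar \<tau>) \<longleftrightarrow> \<tau> \<in> covered_tuples P d t L" if "\<tau> \<in> allowed_tuples P d \<phi> t" for \<tau>
    using that unfolding I_def covered_tuples_def allowed_tuples_def by auto
qed

lemma TPMSat_CX_cost_lower_bound:
  assumes sut: "sut_model P d \<phi>" and model: "\<forall>h\<in>TPMSat_CX_hard N t P d \<phi>. eval I h"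
  shows "card (allowed_tuples P d \<phi> t) - tuple_number N t P d \<phi>
    \<le> card {\<tau> \<in> allowed_tuples P d \<phi> t. \<not> I (CVar \<tau>)}"
proof -
  let ?Ta = "allowed_tuples P d \<phi> t"
  obtain L where L: "length L = N" "\<forall>A\<in>set L. test_case P d \<phi> A"
    and true_covered: "{\<tau> \<in> ?Ta. I (CVar \<tau>)} \<subseteq> covered_tuples P d t L"
    using TPMSat_CX_model_decodes[OF sut model] .
  have "card {\<tau> \<in> ?Ta. I (CVar \<tau>)} \<le> card (covered_tuples P d t L)"
    using true_covered finite_subset[OF covered_tuples_subset_allowed_tuples finite_allowed_tuples]
      L(2) sut by (intro card_mono) auto
  also have "\<dots> \<le> tuple_number N t P d \<phi>"
    using card_covered_tuples_le_tuple_number[OF sut L] .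
  finally have "card ?Ta - tuple_number N t P d \<phi> \<le> card ?Ta - card {\<tau> \<in> ?Ta. I (CVar \<tau>)}"
    by (rule diff_le_mono2)
  also have "\<dots> = card (?Ta - {\<tau> \<in> ?Ta. I (CVar \<tau>)})"
    using finite_allowed_tuples[OF sut] by (simp add: card_Diff_subset)
  also have "?Ta - {\<tau> \<in> ?Ta. I (CVar \<tau>)} = {\<tau> \<in> ?Ta. \<not> I (CVar \<tau>)}" by blast
  finally show ?thesis .
qed

lemma TPMSat_CX_cost_attained:
  assumes sut: "sut_model P d \<phi>" and "\<exists>A. test_case P d \<phi> A"
  obtains I where "\<forall>h\<in>TPMSat_CX_hard N t P d \<phi>. eval I h"
    and "card {\<tau> \<in> allowed_tuples P d \<phi> t. \<not> I (CVar \<tau>)}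
      = card (allowed_tuples P d \<phi> t) - tuple_number N t P d \<phi>"
proof -
  let ?Ta = "allowed_tuples P d \<phi> t"
  obtain L where L: "length L = N" "\<forall>A\<in>set L. test_case P d \<phi> A"
    and optimal: "card (covered_tuples P d t L) = tuple_number N t P d \<phi>"
    using tuple_number_attained[OF assms] by blast
  obtain I where model: "\<forall>h\<in>TPMSat_CX_hard N t P d \<phi>. eval I h"
    and CVar_iff: "\<And>\<tau>. \<tau> \<in> ?Ta \<Longrightarrow> I (CVar \<tau>) \<longleftrightarrow> \<tau> \<in> covered_tuples P d t L"
    using test_cases_encode_TPMSat_CX_model[OF sut L] by blast
  have covered: "covered_tuples P d t L \<subseteq> ?Ta"
    using covered_tuples_subset_allowed_tuples[OF L(2)] .
  then have "{\<tau> \<in> ?Ta. \<not> I (CVar \<tau>)} = ?Ta - covered_tuples P d t L"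
    using CVar_iff by blast
  then have "card {\<tau> \<in> ?Ta. \<not> I (CVar \<tau>)} = card ?Ta - tuple_number N t P d \<phi>"
    using covered finite_allowed_tuples[OF sut] optimal
    by (simp add: card_Diff_subset finite_subset)
  with model show thesis by (rule that)
qed

theorem proposition9:
  fixes P :: "'p set" and d :: "'p \<Rightarrow> 'v set" and \<phi> :: "('p \<times> 'v) form"
    and t N :: nat
  assumes "sut_model P d \<phi>"
    and "\<exists>A. test_case P d \<phi> A"
    and "1 \<le> t" and "t \<le> card P"
    and "N \<ge> 1"
  shows "opt_cost (TPMSat_CX_hard N t P d \<phi>) (TPMSat_CX_soft N t P d \<phi>)
         = enat (card (allowed_tuples P d \<phi> t) - tuple_number N t P d \<phi>)"
proof -
  let ?Ta = "allowed_tuples P d \<phi> t" and ?H = "TPMSat_CX_hard N t P d \<phi>"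
  have "opt_cost ?H (TPMSat_CX_soft N t P d \<phi>)
      = Inf {enat (card {\<tau> \<in> ?Ta. \<not> I (CVar \<tau>)}) | I. \<forall>h\<in>?H. eval I h}"
    unfolding opt_cost_def TPMSat_CX_soft_cost[OF assms(1)] ..
  also have "\<dots> = enat (card ?Ta - tuple_number N t P d \<phi>)"
  proof (rule cInf_eq_minimum)
    obtain I where "\<forall>h\<in>?H. eval I h"
      and "card {\<tau> \<in> ?Ta. \<not> I (CVar \<tau>)} = card ?Ta - tuple_number N t P d \<phi>"
      using TPMSat_CX_cost_attained[OF assms(1,2)] .
    then show "enat (card ?Ta - tuple_number N t P d \<phi>)
        \<in> {enat (card {\<tau> \<in> ?Ta. \<not> I (CVar \<tau>)}) | I. \<forall>h\<in>?H. eval I h}"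
      by force
  qed (auto simp: TPMSat_CX_cost_lower_bound[OF assms(1)])
  finally show ?thesis .
qed

end
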